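(* Let $X$ be a Banach space, $\mathbb F\subseteq\mathbb D$ finite, and $(h,i)\in\mathbb F$ an $\mathbb F$-admissible index. If $f_{\mathbb F}=\sum_{(k,j)\in\mathbb F}x_k^{(j)}\chi_k^{(j)}$ with $x_k^{(j)}\in X$, then there exist elements $y_k^{(j)}\in X$, $(k,j)\in\Phi_h^{(i)}(\mathbb F)$, such that $$f_{\mathbb F}\circ\phi_h^{(i)}=\sum_{(k,j)\in\Phi_h^{(i)}(\mathbb F)}y_k^{(j)}\chi_k^{(j)}\quad\text{and}\quad\sum_{(k,j)\in\mathbb F}\|x_k^{(j)}\|^2=\sum_{(k,j)\in\Phi_h^{(i)}(\mathbb F)}\|y_k^{(j)}\|^2.$$
   Context: Dyadic intervals: $\Delta_k^{(j)}:=[\frac{j-1}{2^k},\frac{j}{2^k})$ for $k\ge0$. Haar functions: for $k\ge1$, integer $j$, $\chi_k^{(j)}(t)=+2^{(k-1)/2}$ on $\Delta_k^{(2j-1)}$, $-2^{(k-1)/2}$ on $\Delta_k^{(2j)}$, $0$ otherwise, $t\in[0,1)$. Dyadic tree $\mathbb D:=\{(k,j):k\ge1;\ j=1,\dots,2^{k-1}\}$. For $(h,i)\in\mathbb D$, $\phi_h^{(i)}:[0,1)\to[0,1)$ is $t\mapsto t+2^{-(h+1)}$ on $\Delta_{h+1}^{(4i-2)}$, $t\mapsto t-2^{-(h+1)}$ on $\Delta_{h+1}^{(4i-1)}$, identity otherwise. An index $(h,i)\in\mathbb F$ is $\mathbb F$-admissible if neither $(h+1,2i-1)$ nor $(h+1,2i)$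 belongs to $\mathbb F$. Fork: $\mathbb F_h^{(i)}:=\{(h,i),(h+1,2i-1),(h+1,2i)\}$. For $(k,j)\in\mathbb D$ define $j^\ast$: $j^\ast=j+2^{k-h-2}$ if $\Delta_{k-1}^{(j)}\subseteq\Delta_{h+1}^{(4i-2)}$; $j^\ast=j-2^{k-h-2}$ if $\Delta_{k-1}^{(j)}\subseteq\Delta_{h+1}^{(4i-1)}$; $j^\ast=j$ otherwise (so that $\chi_k^{(j)}\circ\phi_h^{(i)}=\chi_k^{(j^\ast)}$ for $(k,j)\notin\mathbb F_h^{(i)}$). Then $\Phi_h^{(i)}(\mathbb F):=\{(h+1,2i-1),(h+1,2i)\}\cup\{(k,j^\ast):(k,j)\in\mathbb F\setminus\mathbb F_h^{(i)}\}$. *)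

theory Defs
  imports "HOL-Analysis.Analysis"
begin

definition dyad :: "nat \<Rightarrow> nat \<Rightarrow> real set" where
  "dyad k j = {(real j - 1) / 2 ^ k ..< real j / 2 ^ k}"

definition haar :: "nat \<Rightarrow> nat \<Rightarrow> real \<Rightarrow> real" where
  "haar k j t =
     (if t \<in> dyad k (2 * j - 1) then 2 powr ((real k - 1) / 2)
      else if t \<in> dyad k (2 * j) then - (2 powr ((real k - 1) / 2))
      else 0)"

definition Dtree :: "(nat \<times> nat) set" where
  "Dtree = {(k, j). 1 \<le> k \<and> 1 \<le> j \<and> j \<le> 2 ^ (k - 1)}"

definition phi :: "nat \<Rightarrow> nat \<Rightarrow> real \<Rightarrow> real" where
  "phi h i t =
     (if t \<in> dyad (h + 1) (4 * i - 2) then t + 1 / 2 ^ (h + 1)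
      else if t \<in> dyad (h + 1) (4 * i - 1) then t - 1 / 2 ^ (h + 1)
      else t)"

definition admissible :: "(nat \<times> nat) set \<Rightarrow> nat \<Rightarrow> nat \<Rightarrow> bool" where
  "admissible F h i \<longleftrightarrow> (h + 1, 2 * i - 1) \<notin> F \<and> (h + 1, 2 * i) \<notin> F"

definition fork :: "nat \<Rightarrow> nat \<Rightarrow> (nat \<times> nat) set" where
  "fork h i = {(h, i), (h + 1, 2 * i - 1), (h + 1, 2 * i)}"

definition jstar :: "nat \<Rightarrow> nat \<Rightarrow> nat \<Rightarrow> nat \<Rightarrow> nat" where
  "jstar h i k j =
     (if dyad (k - 1) j \<subseteq> dyad (h + 1) (4 * i - 2) then j + 2 ^ (k - h - 2)
      else if dyad (k - 1) j \<subseteq> dyad (h + 1) (4 * i - 1) then j - 2 ^ (k - h - 2)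
      else j)"

definition Phi :: "nat \<Rightarrow> nat \<Rightarrow> (nat \<times> nat) set \<Rightarrow> (nat \<times> nat) set" where
  "Phi h i F = {(h + 1, 2 * i - 1), (h + 1, 2 * i)}
      \<union> (\<lambda>(k, j). (k, jstar h i k j)) ` (F - fork h i)"

end

theory Submission
  imports Defs
begin

(* The rearrangement phi_h^(i) exchanges the two middle quarters of the support of chi_h^(i)
   by translation. Indexing the dyadic intervals of level n by cell n t = floor (t 2^n), it
   therefore exchanges two adjacent blocks of cells at every level n >= h + 1. Hence
   chi_h^(i) o phi = (chi_(h+1)^(2i-1) + chi_(h+1)^(2i)) / sqrt 2, every other Haar function
   of level at most h + 1 is unchanged (it is constant on the union of the two quarters), and a Haar function chi_k^(j) of level k > h + 1 becomes chi_k^(jstar h i k j), where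
   jstar h i k is an involution. So the coefficient x_h^(i) is split into two copies of x_h^(i) / sqrt 2
   and the other coefficients are only relabelled, which preserves the sum of squared norms. *)

definition swap_block :: "int \<Rightarrow> int \<Rightarrow> int \<Rightarrow> int" where
  "swap_block s b c = (if c div s = b then c + s else if c div s = b + 1 then c - s else c)"

lemma swap_block_swap_block:
  assumes "s > 0" shows "swap_block s b (swap_block s b c) = c"
proof -
  have "(c + s) div s = c div s + 1" "(c - s) div s = c div s - 1"
    using assms div_add_self2[of s "c - s"] by simp_all
  then show ?thesis unfolding swap_block_def by auto
qed

lemma swap_block_eq_iff:
  assumes "s > 0" shows "swap_block s b c = d \<longleftrightarrow> c = swap_block s b d"
  using swap_block_swap_block[OF assms] by metis

lemma swap_block_double:
  assumes "s > 0" and "r \<in> {0, 1}"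
  shows "swap_block (2 * s) b (2 * c + r) = 2 * swap_block s b c + r"
proof -
  have "(2 * c + r) div (2 * s) = c div s"
    using assms by (auto simp: zdiv_zmult2_eq)
  then show ?thesis unfolding swap_block_def by auto
qed

lemma swap_block_nonneg:
  assumes "s > 0" "b \<ge> 0" "c \<ge> 0" shows "swap_block s b c \<ge> 0"
proof -
  have "c - s \<ge> 0" if "c div s = b + 1"
    using that assms div_pos_pos_trivial[of c s] by linarith
  then show ?thesis using assms unfolding swap_block_def by auto
qed

definition cell :: "nat \<Rightarrow> real \<Rightarrow> int" where
  "cell n t = \<lfloor>t * 2 ^ n\<rfloor>"

lemma mem_dyad_iff_cell: "t \<in> dyad n j \<longleftrightarrow> cell n t = int j - 1"
  unfolding dyad_def cell_def by (simp add: floor_eq_iff pos_divide_le_eq pos_less_divide_eq)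

lemma cell_coarsen:
  assumes "n \<le> m" shows "cell n t = cell m t div 2 ^ (m - n)"
proof -
  have "(2::real) ^ m = 2 ^ n * 2 ^ (m - n)"
    using assms by (simp flip: power_add)
  then have "t * 2 ^ n = (t * 2 ^ m) / real_of_int (2 ^ (m - n))"
    by simp
  then show ?thesis
    unfolding cell_def using floor_divide_real_eq_div[of "2 ^ (m - n)" "t * 2 ^ m"] by simp
qed

lemma cell_add: "cell n (t + of_int a / 2 ^ n) = cell n t + a"
proof -
  have "(t + of_int a / 2 ^ n) * 2 ^ n = t * 2 ^ n + of_int a"
    by (simp add: field_simps)
  then show ?thesis unfolding cell_def by simp
qed

lemma left_end_mem_dyad: "(real j - 1) / 2 ^ m \<in> dyad m j"
  unfolding dyad_def by (simp add: divide_strict_right_mono)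

lemma dyad_subset_iff:
  assumes "n \<le> m"
  shows "dyad m j \<subseteq> dyad n b \<longleftrightarrow> (int j - 1) div 2 ^ (m - n) = int b - 1"
proof
  assume "dyad m j \<subseteq> dyad n b"
  then have "(real j - 1) / 2 ^ m \<in> dyad m j \<inter> dyad n b"
    using left_end_mem_dyad by blast
  then have "cell m ((real j - 1) / 2 ^ m) = int j - 1" "cell n ((real j - 1) / 2 ^ m) = int b - 1"
    by (simp_all add: mem_dyad_iff_cell)
  then show "(int j - 1) div 2 ^ (m - n) = int b - 1"
    using cell_coarsen[OF assms] by simp
next
  assume "(int j - 1) div 2 ^ (m - n) = int b - 1"
  then show "dyad m j \<subseteq> dyad n b"
    using cell_coarsen[OF assms] by (auto simp: mem_dyad_iff_cell)
qed

lemma dyad_not_subset_finer: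
  assumes "m < n"
  shows "\<not> dyad m j \<subseteq> dyad n b"
proof
  assume sub: "dyad m j \<subseteq> dyad n b"
  define p where "p = (real j - 1) / 2 ^ m"
  have "(1::real) / 2 ^ n < 1 / 2 ^ m"
    using assms by (simp add: divide_strict_left_mono power_strict_increasing)
  then have "p \<in> dyad m j" "p + 1 / 2 ^ n \<in> dyad m j"
    unfolding p_def dyad_def by (auto simp: add_divide_distrib diff_divide_distrib)
  then have "p \<in> dyad n b" "p + 1 / 2 ^ n \<in> dyad n b"
    using sub by auto
  then show False
    unfolding dyad_def by (auto simp: add_divide_distrib diff_divide_distrib)
qed

definition haar_amp :: "nat \<Rightarrow> real" where
  "haar_amp k = 2 powr ((real k - 1) / 2)"

lemma haar_amp_Suc: "haar_amp (Suc k) = sqrt 2 * haar_amp k"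
proof -
  have "haar_amp (Suc k) = 2 powr ((real k - 1) / 2 + 1 / 2)"
    unfolding haar_amp_def by (simp add: field_simps)
  then show ?thesis
    unfolding haar_amp_def by (simp add: powr_add powr_half_sqrt)
qed

lemma haar_eq_cell:
  assumes "j \<ge> 1"
  shows "haar k j t = (if cell k t = 2 * int j - 2 then haar_amp k
    else if cell k t = 2 * int j - 1 then - haar_amp k else 0)"
  using assms unfolding haar_def haar_amp_def by (simp add: mem_dyad_iff_cell of_nat_diff)

lemma cell_phi:
  assumes "i \<ge> 1" and "h + 1 \<le> n"
  shows "cell n (phi h i t) = swap_block (2 ^ (n - h - 1)) (4 * int i - 3) (cell n t)"
proof -
  define S :: int where "S = 2 ^ (n - h - 1)"
  have "(2::real) ^ n = 2 ^ (h + 1) * 2 ^ (n - h - 1)"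
    using le_add_diff_inverse[OF assms(2)] by (metis diff_diff_left power_add)
  then have shift: "1 / 2 ^ (h + 1) = of_int S / (2::real) ^ n"
    unfolding S_def by simp
  have "cell (h + 1) t = cell n t div S"
    unfolding S_def using cell_coarsen[OF assms(2)] by simp
  then have "t \<in> dyad (h + 1) (4 * i - 2) \<longleftrightarrow> cell n t div S = 4 * int i - 3"
    "t \<in> dyad (h + 1) (4 * i - 1) \<longleftrightarrow> cell n t div S = 4 * int i - 2"
    using assms(1) by (simp_all add: mem_dyad_iff_cell of_nat_diff)
  moreover have "cell n (t - 1 / 2 ^ (h + 1)) = cell n t - S"
    using cell_add[of n t "- S"] unfolding shift by simp
  ultimately show ?thesis
    unfolding phi_def swap_block_def shift S_def[symmetric] by (auto simp: cell_add)
qed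

lemma haar_fork_phi:
  assumes "i \<ge> 1"
  shows "haar h i (phi h i t) = (haar (h + 1) (2 * i - 1) t + haar (h + 1) (2 * i) t) / sqrt 2"
proof -
  define c where "c = cell (h + 1) t"
  define c' where "c' = swap_block 1 (4 * int i - 3) c"
  have "cell h (phi h i t) = c' div 2"
    unfolding c_def c'_def using cell_coarsen[of h "h + 1"] cell_phi[OF assms, of h "h + 1"] by simp
  moreover have "c' div 2 = 2 * int i - 2 \<longleftrightarrow> c = 4 * int i - 4 \<or> c = 4 * int i - 2"
    "c' div 2 = 2 * int i - 1 \<longleftrightarrow> c = 4 * int i - 3 \<or> c = 4 * int i - 1"
    unfolding c'_def swap_block_def by presburger+
  ultimately have "haar h i (phi h i t) =
      (if c = 4 * int i - 4 \<or> c = 4 * int i - 2 then haar_amp h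
       else if c = 4 * int i - 3 \<or> c = 4 * int i - 1 then - haar_amp h else 0)"
    using haar_eq_cell[OF assms] by simp
  moreover have "haar (h + 1) (2 * i - 1) t = (if c = 4 * int i - 4 then sqrt 2 * haar_amp h
      else if c = 4 * int i - 3 then - (sqrt 2 * haar_amp h) else 0)"
    using assms haar_eq_cell[of "2 * i - 1" "h + 1" t] by (simp add: c_def of_nat_diff haar_amp_Suc)
  moreover have "haar (h + 1) (2 * i) t = (if c = 4 * int i - 2 then sqrt 2 * haar_amp h
      else if c = 4 * int i - 1 then - (sqrt 2 * haar_amp h) else 0)"
    using assms haar_eq_cell[of "2 * i" "h + 1" t] by (simp add: c_def haar_amp_Suc)
  ultimately show ?thesis
    by auto
qed

lemma haar_phi_low:
  assumes "i \<ge> 1" and "1 \<le> k" "k \<le> h + 1" and "j \<ge> 1" and "(k, j) \<notin> fork h i"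
  shows "haar k j (phi h i t) = haar k j t"
proof -
  define c where "c = cell (h + 1) t"
  define c' where "c' = swap_block 1 (4 * int i - 3) c"
  define D :: int where "D = 2 ^ (h + 1 - k)"
  have cells: "cell k (phi h i t) = c' div D" "cell k t = c div D"
    unfolding c_def c'_def D_def
    using cell_coarsen[OF assms(3)] cell_phi[OF assms(1), of h "h + 1"] by simp_all
  have "(c' div D = 2 * int j - 2 \<longleftrightarrow> c div D = 2 * int j - 2)
      \<and> (c' div D = 2 * int j - 1 \<longleftrightarrow> c div D = 2 * int j - 1)"
  proof -
    consider "k = h + 1" | "k = h" | "k < h" using assms(3) by linarith
    then show ?thesis
    proof cases
      case 1
      then have "D = 1" "int j \<noteq> 2 * int i - 1" "int j \<noteq> 2 * int i"
        using assms(1,5) unfolding D_def fork_def by auto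
      then show ?thesis unfolding c'_def swap_block_def by auto
    next
      case 2
      then have "D = 2" "j \<noteq> i"
        using assms(5) unfolding D_def fork_def by auto
      then show ?thesis unfolding c'_def swap_block_def by auto
    next
      case 3
      then have "h + 1 - k = 2 + (h - 1 - k)"
        by simp
      then have "D = 4 * 2 ^ (h - 1 - k)"
        unfolding D_def power_add by simp
      \<comment> \<open>the exchanged cells 4i-3 and 4i-2 of level h+1 lie in one cell of level h-1\<close>
      moreover have "c' div 4 = c div 4"
        unfolding c'_def swap_block_def by auto presburger+
      ultimately show ?thesis by (simp add: zdiv_zmult2_eq)
    qed
  qed
  then show ?thesis
    by (simp add: haar_eq_cell[OF assms(4)] cells)
qed

lemma jstar_low:
  assumes "k \<le> h + 1"
  shows "jstar h i k j = j"
  using assms dyad_not_subset_finer[of "k - 1" "h + 1"] unfolding jstar_def by auto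

lemma jstar_high:
  assumes "i \<ge> 1" and "j \<ge> 1" and "h + 1 \<le> m"
  shows "int (jstar h i (Suc m) j) = swap_block (2 ^ (m - h - 1)) (4 * int i - 3) (int j - 1) + 1"
proof -
  define s :: nat where "s = 2 ^ (m - h - 1)"
  have jstar_s: "jstar h i (Suc m) j = (if dyad m j \<subseteq> dyad (h + 1) (4 * i - 2) then j + s
      else if dyad m j \<subseteq> dyad (h + 1) (4 * i - 1) then j - s else j)"
    unfolding jstar_def s_def by simp
  have subset_iff: "dyad m j \<subseteq> dyad (h + 1) (4 * i - 2) \<longleftrightarrow> (int j - 1) div int s = 4 * int i - 3"
    "dyad m j \<subseteq> dyad (h + 1) (4 * i - 1) \<longleftrightarrow> (int j - 1) div int s = 4 * int i - 2"
    using assms(1) dyad_subset_iff[OF assms(3)] unfolding s_def by (simp_all add: of_nat_diff)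
  have "s \<le> j" if "(int j - 1) div int s = 4 * int i - 2"
    using that assms(1,2) div_pos_pos_trivial[of "int j - 1" "int s"] by linarith
  moreover have "(2::int) ^ (m - h - 1) = int s"
    unfolding s_def by simp
  ultimately show ?thesis
    unfolding jstar_s subset_iff swap_block_def by (auto simp: of_nat_diff)
qed

lemma jstar_pos:
  assumes "i \<ge> 1" and "j \<ge> 1"
  shows "jstar h i k j \<ge> 1"
proof (cases "k \<le> h + 1")
  case True
  then show ?thesis using assms(2) by (simp add: jstar_low)
next
  case False
  then obtain m where "k = Suc m" and m: "h + 1 \<le> m"
    by (metis Suc_le_D not_less_eq_eq)
  then show ?thesis
    using jstar_high[OF assms m] swap_block_nonneg[of "2 ^ (m - h - 1)" "4 * int i - 3" "int j - 1"] assms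
    by simp
qed

lemma jstar_jstar:
  assumes "i \<ge> 1" and "j \<ge> 1"
  shows "jstar h i k (jstar h i k j) = j"
proof (cases "k \<le> h + 1")
  case True
  then show ?thesis by (simp add: jstar_low)
next
  case False
  then obtain m where "k = Suc m" and m: "h + 1 \<le> m"
    by (metis Suc_le_D not_less_eq_eq)
  then have "int (jstar h i k (jstar h i k j)) = int j"
    using jstar_high[OF assms(1) jstar_pos[OF assms] m] jstar_high[OF assms m]
    by (simp add: swap_block_swap_block)
  then show ?thesis by simp
qed

lemma haar_phi_high:
  assumes "i \<ge> 1" and "j \<ge> 1" and "h + 1 \<le> m"
  shows "haar (Suc m) j (phi h i t) = haar (Suc m) (jstar h i (Suc m) j) t"
proof -
  define s :: int where "s = 2 ^ (m - h - 1)"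
  define b where "b = 4 * int i - 3"
  define x where "x = cell (Suc m) t"
  have s: "s > 0" and s2: "2 * s > 0" unfolding s_def by simp_all
  have "Suc m - h - 1 = Suc (m - h - 1)"
    using assms(3) by simp
  then have "(2::int) ^ (Suc m - h - 1) = 2 * s"
    unfolding s_def by (simp only: power_Suc)
  then have phi: "cell (Suc m) (phi h i t) = swap_block (2 * s) b x"
    unfolding x_def b_def using cell_phi[OF assms(1), of h "Suc m" t] assms(3) by simp
  have jstar: "int (jstar h i (Suc m) j) - 1 = swap_block s b (int j - 1)"
    unfolding s_def b_def using jstar_high[OF assms] by simp
  \<comment> \<open>chi_(m+1)^(j) lives on the cells 2(j-1) and 2(j-1)+1; on such pairs the swap at level
    m+1 acts as the swap at level m acts on j-1, and the latter is how jstar is defined\<close>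
  have "swap_block (2 * s) b x = 2 * (int j - 1) + r \<longleftrightarrow>
      x = 2 * (int (jstar h i (Suc m) j) - 1) + r" if "r \<in> {0, 1}" for r
    unfolding swap_block_eq_iff[OF s2] swap_block_double[OF s that] jstar
    by simp
  from this[of 0] this[of 1] show ?thesis
    using jstar_pos[OF assms(1,2)] assms(2)
    by (simp add: haar_eq_cell phi x_def[symmetric] algebra_simps)
qed

lemma haar_comp_phi:
  assumes "i \<ge> 1" and "(k, j) \<in> Dtree" and "(k, j) \<notin> fork h i"
  shows "haar k j (phi h i t) = haar k (jstar h i k j) t"
proof (cases "k \<le> h + 1")
  case True
  then show ?thesis
    using assms haar_phi_low jstar_low unfolding Dtree_def by simp
next
  case False
  then obtain m where "k = Suc m" and "h + 1 \<le> m"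
    by (metis Suc_le_D not_less_eq_eq)
  then show ?thesis
    using assms haar_phi_high unfolding Dtree_def by simp
qed

definition star_index :: "nat \<Rightarrow> nat \<Rightarrow> nat \<times> nat \<Rightarrow> nat \<times> nat" where
  "star_index h i = (\<lambda>(k, j). (k, jstar h i k j))"

lemma star_index_star_index:
  assumes "i \<ge> 1" and "p \<in> Dtree"
  shows "star_index h i (star_index h i p) = p"
  using assms jstar_jstar unfolding star_index_def Dtree_def by auto

lemma star_index_notin_fork:
  assumes "p \<notin> fork h i"
  shows "star_index h i p \<notin> fork h i"
  using assms jstar_low unfolding star_index_def fork_def by (cases p) auto

lemma sum_Phi:
  assumes "finite F" and "F \<subseteq> Dtree" and "i \<ge> 1"
  shows "sum f (Phi h i F) = f (h + 1, 2 * i - 1) + f (h + 1, 2 * i)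
    + (\<Sum>p\<in>F - fork h i. f (star_index h i p))"
proof -
  define G where "G = F - fork h i"
  have "star_index h i (star_index h i p) = p" if "p \<in> G" for p
    using that assms(2) star_index_star_index[OF assms(3)] unfolding G_def by (meson DiffD1 subsetD)
  then have "inj_on (star_index h i) G"
    by (rule inj_on_inverseI)
  have "star_index h i ` G \<inter> fork h i = {}"
    using star_index_notin_fork unfolding G_def by auto
  then have "{(h + 1, 2 * i - 1), (h + 1, 2 * i)} \<inter> star_index h i ` G = {}"
    unfolding fork_def by auto
  moreover have "(h + 1, 2 * i - 1) \<noteq> (h + 1, 2 * i)"
    using assms(3) by simp
  moreover have "Phi h i F = {(h + 1, 2 * i - 1), (h + 1, 2 * i)} \<union> star_index h i ` G"
    unfolding Phi_def star_index_def G_def ..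
  ultimately show ?thesis
    using assms(1) \<open>inj_on (star_index h i) G\<close> unfolding G_def
    by (simp add: sum.union_disjoint sum.reindex add.assoc)
qed

lemma sum_admissible:
  assumes "finite F" and "(h, i) \<in> F" and "admissible F h i"
  shows "sum f F = f (h, i) + sum f (F - fork h i)"
proof -
  have "F = insert (h, i) (F - fork h i)" and "(h, i) \<notin> F - fork h i"
    using assms(2,3) unfolding admissible_def fork_def by auto
  then show ?thesis
    using assms(1) by (metis finite_Diff sum.insert)
qed

definition Phi_coeffs :: "nat \<Rightarrow> nat \<Rightarrow> (nat \<times> nat \<Rightarrow> 'a::real_normed_vector) \<Rightarrow> nat \<times> nat \<Rightarrow> 'a"
  where "Phi_coeffs h i x q =
    (if q \<in> {(h + 1, 2 * i - 1), (h + 1, 2 * i)} then x (h, i) /\<^sub>R sqrt 2 else x (star_index h i q))"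

lemma Phi_coeffs_star_index:
  assumes "i \<ge> 1" and "p \<in> Dtree - fork h i"
  shows "Phi_coeffs h i x (star_index h i p) = x p"
proof -
  have "star_index h i p \<notin> {(h + 1, 2 * i - 1), (h + 1, 2 * i)}"
    using star_index_notin_fork[of p h i] assms(2) unfolding fork_def by blast
  then show ?thesis
    using assms unfolding Phi_coeffs_def by (simp add: star_index_star_index)
qed

lemma Phi_coeffs_fork:
  "Phi_coeffs h i x (h + 1, 2 * i - 1) = x (h, i) /\<^sub>R sqrt 2"
  "Phi_coeffs h i x (h + 1, 2 * i) = x (h, i) /\<^sub>R sqrt 2"
  unfolding Phi_coeffs_def by simp_all

lemma haar_expansion_comp_phi:
  assumes "finite F" and "F \<subseteq> Dtree" and "(h, i) \<in> F" and "admissible F h i"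
  shows "(\<Sum>(k, j)\<in>F. haar k j (phi h i t) *\<^sub>R x (k, j))
    = (\<Sum>(k, j)\<in>Phi h i F. haar k j t *\<^sub>R Phi_coeffs h i x (k, j))"
proof -
  have i: "i \<ge> 1"
    using assms(2,3) unfolding Dtree_def by auto
  have "(\<Sum>(k, j)\<in>F - fork h i. haar k j (phi h i t) *\<^sub>R x (k, j))
      = (\<Sum>p\<in>F - fork h i. (\<lambda>(k, j). haar k j t *\<^sub>R Phi_coeffs h i x (k, j)) (star_index h i p))"
  proof (rule sum.cong)
    fix p assume p: "p \<in> F - fork h i"
    obtain k j where kj: "p = (k, j)"
      by (cases p)
    have "haar k j (phi h i t) = haar k (jstar h i k j) t"
      using haar_comp_phi[OF i] p assms(2) unfolding kj by blast
    moreover have "Phi_coeffs h i x (star_index h i p) = x p"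
      using Phi_coeffs_star_index[OF i] p assms(2) by blast
    ultimately show "(\<lambda>(k, j). haar k j (phi h i t) *\<^sub>R x (k, j)) p
        = (\<lambda>(k, j). haar k j t *\<^sub>R Phi_coeffs h i x (k, j)) (star_index h i p)"
      unfolding kj star_index_def by simp
  qed simp
  moreover have "haar h i (phi h i t) *\<^sub>R x (h, i)
      = haar (h + 1) (2 * i - 1) t *\<^sub>R Phi_coeffs h i x (h + 1, 2 * i - 1)
        + haar (h + 1) (2 * i) t *\<^sub>R Phi_coeffs h i x (h + 1, 2 * i)"
    unfolding haar_fork_phi[OF i] Phi_coeffs_fork
    by (simp add: divide_inverse distrib_right scaleR_add_left)
  ultimately show ?thesis
    using assms i by (simp add: sum_admissible sum_Phi add.assoc)
qed

lemma sum_norm_Phi_coeffs: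
  assumes "finite F" and "F \<subseteq> Dtree" and "(h, i) \<in> F" and "admissible F h i"
  shows "(\<Sum>(k, j)\<in>F. (norm (x (k, j)))\<^sup>2) = (\<Sum>(k, j)\<in>Phi h i F. (norm (Phi_coeffs h i x (k, j)))\<^sup>2)"
proof -
  have i: "i \<ge> 1"
    using assms(2,3) unfolding Dtree_def by auto
  have "(\<Sum>(k, j)\<in>F - fork h i. (norm (x (k, j)))\<^sup>2)
      = (\<Sum>p\<in>F - fork h i. (\<lambda>(k, j). (norm (Phi_coeffs h i x (k, j)))\<^sup>2) (star_index h i p))"
  proof (rule sum.cong)
    fix p assume "p \<in> F - fork h i"
    then have "Phi_coeffs h i x (star_index h i p) = x p"
      using Phi_coeffs_star_index[OF i] assms(2) by blast
    then show "(\<lambda>(k, j). (norm (x (k, j)))\<^sup>2) p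
        = (\<lambda>(k, j). (norm (Phi_coeffs h i x (k, j)))\<^sup>2) (star_index h i p)"
      by (simp add: case_prod_beta)
  qed simp
  moreover have "(norm (x (h, i)))\<^sup>2
      = (norm (Phi_coeffs h i x (h + 1, 2 * i - 1)))\<^sup>2 + (norm (Phi_coeffs h i x (h + 1, 2 * i)))\<^sup>2"
    unfolding Phi_coeffs_fork by (simp add: power_mult_distrib power_inverse)
  ultimately show ?thesis
    using assms i by (simp add: sum_admissible sum_Phi add.assoc)
qed

theorem lemma3p7:
  fixes F :: "(nat \<times> nat) set" and h i :: nat
    and x :: "nat \<times> nat \<Rightarrow> 'a::banach"
  assumes "finite F" and "F \<subseteq> Dtree"
    and "(h, i) \<in> F" and "admissible F h i"
  shows "\<exists>y :: nat \<times> nat \<Rightarrow> 'a.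
           (\<forall>t \<in> {0..<1}.
              (\<Sum>(k, j)\<in>F. haar k j (phi h i t) *\<^sub>R x (k, j))
              = (\<Sum>(k, j)\<in>Phi h i F. haar k j t *\<^sub>R y (k, j)))
         \<and> (\<Sum>(k, j)\<in>F. (norm (x (k, j)))\<^sup>2)
           = (\<Sum>(k, j)\<in>Phi h i F. (norm (y (k, j)))\<^sup>2)"
  using haar_expansion_comp_phi[OF assms] sum_norm_Phi_coeffs[OF assms] by blast

end
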